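(* Let $\mu,\nu$ be finite measures on $\mathbb R$ with finite first moments such that $\mu\le_E\nu$. Define $\beta=(\nu(\mathbb R)-\mu(\mathbb R))\,\delta_{\frac{\overline\nu-\overline\mu}{\nu(\mathbb R)-\mu(\mathbb R)}}$ (with $\beta$ the zero measure if $\nu(\mathbb R)=\mu(\mathbb R)$). Then $\nu-\mu\ge_{cx}\beta$, i.e. $\int f\,d\beta\le\int f\,d\nu-\int f\,d\mu$ for every convex $f:\mathbb R\to\mathbb R$. Consequently $P_\nu-P_\mu\ge P_\beta$, where $P_\beta(k)=\big((\nu(\mathbb R)-\mu(\mathbb R))k-(\overline\nu-\overline\mu)\big)^+$.
   Context: For a finite measure $\eta$ on $\mathbb R$ with finite first moment, $\overline\eta=\int x\,\eta(dx)$ and $P_\eta(k)=\int(k-x)^+\eta(dx)$. $\mu\le_E\nu$ means $\int f\,d\mu\le\int f\,d\nu$ for all non-negative convex $f:\mathbb R\to\mathbb R_+$. The convex order $\le_{cx}$ means comparison of integrals of all convex functions. *)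

theory Defs
  imports "HOL-Probability.Probability"
begin

definition mass :: "real measure \<Rightarrow> real" where
  "mass M = measure M UNIV"

definition bary :: "real measure \<Rightarrow> real" where
  "bary M = (\<integral>x. x \<partial>M)"

definition put_fun :: "real measure \<Rightarrow> real \<Rightarrow> real" where
  "put_fun M k = (\<integral>x. max (k - x) 0 \<partial>M)"

definition fin_meas_first_moment :: "real measure \<Rightarrow> bool" where
  "fin_meas_first_moment M \<longleftrightarrow>
     sets M = sets borel \<and> finite_measure M \<and> integrable M (\<lambda>x. x)"

definition le_E :: "real measure \<Rightarrow> real measure \<Rightarrow> bool" where
  "le_E \<mu> \<nu> \<longleftrightarrow>
     (\<forall>f::real \<Rightarrow> real. convex_on UNIV f \<and> (\<forall>x. 0 \<le> f x) \<longrightarrow>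
        (\<integral>\<^sup>+x. ennreal (f x) \<partial>\<mu>) \<le> (\<integral>\<^sup>+x. ennreal (f x) \<partial>\<nu>))"

definition beta_meas :: "real measure \<Rightarrow> real measure \<Rightarrow> real measure" where
  "beta_meas \<mu> \<nu> =
     (if mass \<nu> = mass \<mu> then null_measure borel
      else scale_measure (ennreal (mass \<nu> - mass \<mu>))
             (return borel ((bary \<nu> - bary \<mu>) / (mass \<nu> - mass \<mu>))))"

end

theory Submission
  imports Defs
begin

(* If a + s x is an affine minorant of a convex f, then f - (a + s x) is non-negative and convex,
  so mu <=_E nu gives int f d(nu - mu) >= a Dm + s Db, where Dm and Db are the differences of the
  masses and of the barycentres. Choosing a supporting line of f at the atom c = Db / Dm of beta
  turns the right-hand side into Dm f(c), the integral of f against beta. If Dm = 0 one still needs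
  Db = 0: the minorant s x - n of (s x - n)^+ gives s Db <= int (s x - n)^+ dnu, which tends to 0.
  The put inequality is the case f x = (k - x)^+. *)

lemma fin_meas_first_moment_space:
  "fin_meas_first_moment M \<Longrightarrow> space M = UNIV"
  unfolding fin_meas_first_moment_def using sets_eq_imp_space_eq[of M borel] by simp

lemma fin_meas_first_moment_borel_measurable_eq:
  "fin_meas_first_moment M \<Longrightarrow> borel_measurable M = borel_measurable borel"
  unfolding fin_meas_first_moment_def using measurable_cong_sets[of M borel borel borel] by simp

lemma fin_meas_first_moment_integrable_affine:
  "fin_meas_first_moment M \<Longrightarrow> integrable M (\<lambda>x. a + s * x :: real)"
  unfolding fin_meas_first_moment_def
  by (intro Bochner_Integration.integrable_add integrable_mult_right finite_measure.integrable_const) auto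

lemma fin_meas_first_moment_integral_affine:
  assumes M: "fin_meas_first_moment M"
  shows "(\<integral>x. a + s * x \<partial>M) = a * mass M + s * bary M"
proof -
  have "integrable M (\<lambda>x. a)" "integrable M (\<lambda>x. s * x)"
    using fin_meas_first_moment_integrable_affine[OF M, of a 0]
      fin_meas_first_moment_integrable_affine[OF M, of 0 s] by simp_all
  then have "(\<integral>x. a + s * x \<partial>M) = (\<integral>x. a \<partial>M) + (\<integral>x. s * x \<partial>M)"
    by (rule Bochner_Integration.integral_add)
  then show ?thesis
    using fin_meas_first_moment_space[OF M] by (simp add: mass_def bary_def)
qed

lemma fin_meas_first_moment_integrable_positive_part_affine:
  "fin_meas_first_moment M \<Longrightarrow> integrable M (\<lambda>x. max (a + b * x) 0 :: real)"
  using fin_meas_first_moment_integrable_affine[of M a b] fin_meas_first_moment_integrable_affine[of M 0 0]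
  by (intro integrable_max) simp_all

lemma convex_on_affine: "convex S \<Longrightarrow> convex_on S (\<lambda>x::real. a + b * x)"
proof -
  have "a + b * (u * x + v * y) = u * (a + b * x) + v * (a + b * y)" if "u + v = 1" for u v x y
  proof -
    have "a + b * (u * x + v * y) = (u + v) * a + b * (u * x + v * y)" using that by simp
    also have "\<dots> = u * (a + b * x) + v * (a + b * y)" by (simp add: algebra_simps)
    finally show ?thesis .
  qed
  then show "convex S \<Longrightarrow> ?thesis" unfolding convex_on_def by simp
qed

lemma convex_on_max:
  assumes "convex_on S f" and "convex_on S g"
  shows "convex_on S (\<lambda>x. max (f x) (g x))"
proof (rule convex_onI)
  show "convex S" using assms(1) by (rule convex_on_imp_convex)
  fix t :: real and x y assume t: "0 < t" "t < 1" and xy: "x \<in> S" "y \<in> S"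
  have "(1 - t) * f x + t * f y \<le> (1 - t) * max (f x) (g x) + t * max (f y) (g y)"
    "(1 - t) * g x + t * g y \<le> (1 - t) * max (f x) (g x) + t * max (f y) (g y)"
    using t by (intro add_mono mult_left_mono; simp)+
  with convex_onD[OF assms(1), of t x y] convex_onD[OF assms(2), of t x y] t xy
  show "max (f ((1 - t) *\<^sub>R x + t *\<^sub>R y)) (g ((1 - t) *\<^sub>R x + t *\<^sub>R y))
        \<le> (1 - t) * max (f x) (g x) + t * max (f y) (g y)" by simp
qed

lemma convex_on_positive_part_affine: "convex_on UNIV (\<lambda>x::real. max (a + b * x) 0)"
  by (intro convex_on_max convex_on_affine) (auto simp: convex_on_const)

lemma integral_excess_tendsto_0:
  fixes f :: "'a \<Rightarrow> real"
  assumes f: "integrable M f"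
  shows "(\<lambda>n. \<integral>x. max (f x - real n) 0 \<partial>M) \<longlonglongrightarrow> 0"
proof -
  have "(\<lambda>n. \<integral>x. max (f x - real n) 0 \<partial>M) \<longlonglongrightarrow> (\<integral>x. 0 \<partial>M)"
  proof (rule integral_dominated_convergence[where w = "\<lambda>x. \<bar>f x\<bar>"])
    show "(\<lambda>x. max (f x - real n) 0) \<in> borel_measurable M" for n
      using borel_measurable_integrable[OF f] by measurable
    show "AE x in M. (\<lambda>n. max (f x - real n) 0) \<longlonglongrightarrow> 0"
    proof (rule AE_I2)
      fix x
      obtain N :: nat where "f x < real N" using reals_Archimedean2 by blast
      then have "\<forall>n\<ge>N. max (f x - real n) 0 = 0" by auto
      then show "(\<lambda>n. max (f x - real n) 0) \<longlonglongrightarrow> 0"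
        by (intro tendsto_eventually eventually_sequentiallyI[of N]) auto
    qed
    show "integrable M (\<lambda>x. \<bar>f x\<bar>)" using f by (rule integrable_abs)
    show "AE x in M. norm (max (f x - real n) 0) \<le> \<bar>f x\<bar>" for n
      by (rule AE_I2) auto
  qed simp
  then show ?thesis by simp
qed

lemma le_E_integral_le:
  assumes "le_E \<mu> \<nu>" and "convex_on UNIV g" and "\<And>x. 0 \<le> g x"
    and "integrable \<mu> g" and "integrable \<nu> g"
  shows "(\<integral>x. g x \<partial>\<mu>) \<le> (\<integral>x. g x \<partial>\<nu>)"
proof -
  have "ennreal (\<integral>x. g x \<partial>\<mu>) = (\<integral>\<^sup>+x. ennreal (g x) \<partial>\<mu>)"
    using assms by (intro nn_integral_eq_integral[symmetric]) auto
  also have "\<dots> \<le> (\<integral>\<^sup>+x. ennreal (g x) \<partial>\<nu>)"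
    using assms unfolding le_E_def by blast
  also have "\<dots> = ennreal (\<integral>x. g x \<partial>\<nu>)"
    using assms by (intro nn_integral_eq_integral) auto
  finally show ?thesis
    using assms by (simp add: ennreal_le_iff integral_nonneg_AE)
qed

lemma le_E_mass_le:
  assumes M: "fin_meas_first_moment \<mu>" and N: "fin_meas_first_moment \<nu>" and E: "le_E \<mu> \<nu>"
  shows "mass \<mu> \<le> mass \<nu>"
proof -
  have one_int: "integrable \<mu> (\<lambda>x. 1 :: real)" "integrable \<nu> (\<lambda>x. 1 :: real)"
    using fin_meas_first_moment_integrable_affine[OF M, of 1 0]
      fin_meas_first_moment_integrable_affine[OF N, of 1 0] by simp_all
  have "(\<integral>x. 1 \<partial>\<mu>) \<le> (\<integral>x. (1::real) \<partial>\<nu>)"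
    by (rule le_E_integral_le[OF E _ _ one_int]) (simp_all add: convex_on_const)
  then show ?thesis
    using fin_meas_first_moment_integral_affine[OF M, of 1 0]
      fin_meas_first_moment_integral_affine[OF N, of 1 0] by simp
qed

lemma le_E_affine_minorant:
  fixes f :: "real \<Rightarrow> real"
  assumes M: "fin_meas_first_moment \<mu>" and N: "fin_meas_first_moment \<nu>" and E: "le_E \<mu> \<nu>"
    and f: "convex_on UNIV f" "integrable \<mu> f" "integrable \<nu> f"
    and minorant: "\<And>x. a + s * x \<le> f x"
  shows "a * (mass \<nu> - mass \<mu>) + s * (bary \<nu> - bary \<mu>) \<le> (\<integral>x. f x \<partial>\<nu>) - (\<integral>x. f x \<partial>\<mu>)"
proof -
  define g where "g x = f x + (- a + - s * x)" for x
  have g_int: "integrable M g"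
    and g_integral: "(\<integral>x. g x \<partial>M) = (\<integral>x. f x \<partial>M) - (a * mass M + s * bary M)"
    if "fin_meas_first_moment M" "integrable M f" for M
  proof -
    have "integrable M (\<lambda>x. - a + - s * x)"
      using fin_meas_first_moment_integrable_affine[OF that(1)] .
    then show "integrable M g"
      unfolding g_def using that(2) by (rule Bochner_Integration.integrable_add[rotated])
    show "(\<integral>x. g x \<partial>M) = (\<integral>x. f x \<partial>M) - (a * mass M + s * bary M)"
      unfolding g_def using that(2) \<open>integrable M (\<lambda>x. - a + - s * x)\<close>
        fin_meas_first_moment_integral_affine[OF that(1), of "-a" "-s"] by simp
  qed
  have "convex_on UNIV g"
    unfolding g_def using f(1) by (intro convex_on_add convex_on_affine) auto
  moreover have "0 \<le> g x" for x
    unfolding g_def using minorant[of x] by simp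
  ultimately have "(\<integral>x. g x \<partial>\<mu>) \<le> (\<integral>x. g x \<partial>\<nu>)"
    using g_int[OF M f(2)] g_int[OF N f(3)] by (rule le_E_integral_le[OF E])
  then have "(\<integral>x. f x \<partial>\<mu>) - (a * mass \<mu> + s * bary \<mu>) \<le> (\<integral>x. f x \<partial>\<nu>) - (a * mass \<nu> + s * bary \<nu>)"
    unfolding g_integral[OF M f(2)] g_integral[OF N f(3)] .
  then show ?thesis by (simp add: algebra_simps)
qed

lemma le_E_bary_eq_if_mass_eq:
  assumes M: "fin_meas_first_moment \<mu>" and N: "fin_meas_first_moment \<nu>" and E: "le_E \<mu> \<nu>"
    and mass_eq: "mass \<nu> = mass \<mu>"
  shows "bary \<nu> = bary \<mu>"
proof -
  have "s * (bary \<nu> - bary \<mu>) \<le> 0" for s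
  proof (rule LIMSEQ_le_const[OF integral_excess_tendsto_0, of \<nu> "\<lambda>x. s * x"])
    show "integrable \<nu> (\<lambda>x. s * x)"
      using fin_meas_first_moment_integrable_affine[OF N, of 0 s] by simp
    have "s * (bary \<nu> - bary \<mu>) \<le> (\<integral>x. max (s * x - real n) 0 \<partial>\<nu>)" for n
    proof -
      have "- real n * (mass \<nu> - mass \<mu>) + s * (bary \<nu> - bary \<mu>)
          \<le> (\<integral>x. max (- real n + s * x) 0 \<partial>\<nu>) - (\<integral>x. max (- real n + s * x) 0 \<partial>\<mu>)"
        by (intro le_E_affine_minorant[OF M N E] convex_on_positive_part_affine
            fin_meas_first_moment_integrable_positive_part_affine[OF M]
            fin_meas_first_moment_integrable_positive_part_affine[OF N]) simp
      then have "s * (bary \<nu> - bary \<mu>)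
          \<le> (\<integral>x. max (s * x - real n) 0 \<partial>\<nu>) - (\<integral>x. max (s * x - real n) 0 \<partial>\<mu>)"
        using mass_eq by simp
      moreover have "0 \<le> (\<integral>x. max (s * x - real n) 0 \<partial>\<mu>)"
        by (intro integral_nonneg_AE) simp
      ultimately show ?thesis by linarith
    qed
    then show "\<exists>N. \<forall>n\<ge>N. s * (bary \<nu> - bary \<mu>) \<le> (\<integral>x. max (s * x - real n) 0 \<partial>\<nu>)"
      by blast
  qed
  from this[of 1] this[of "-1"] show ?thesis by simp
qed

(* For equal masses both sides vanish, the left one because x / 0 = 0. *)
lemma le_E_bary_diff_eq_mass_diff_mult:
  assumes "fin_meas_first_moment \<mu>" and "fin_meas_first_moment \<nu>" and "le_E \<mu> \<nu>"
  shows "(mass \<nu> - mass \<mu>) * ((bary \<nu> - bary \<mu>) / (mass \<nu> - mass \<mu>)) = bary \<nu> - bary \<mu>"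
  using le_E_bary_eq_if_mass_eq[OF assms] by (cases "mass \<nu> = mass \<mu>") simp_all

lemma integral_beta_meas:
  fixes f :: "real \<Rightarrow> real"
  assumes mass_le: "mass \<mu> \<le> mass \<nu>" and f: "f \<in> borel_measurable borel"
  shows "(\<integral>x. f x \<partial>beta_meas \<mu> \<nu>)
    = (mass \<nu> - mass \<mu>) * f ((bary \<nu> - bary \<mu>) / (mass \<nu> - mass \<mu>))"
proof (cases "mass \<nu> = mass \<mu>")
  case True
  then show ?thesis by (simp add: beta_meas_def)
next
  case False
  define r where "r = mass \<nu> - mass \<mu>"
  define c where "c = (bary \<nu> - bary \<mu>) / (mass \<nu> - mass \<mu>)"
  have "r > 0" using False mass_le unfolding r_def by simp
  have "beta_meas \<mu> \<nu> = scale_measure (ennreal r) (return borel c)"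
    using False unfolding beta_meas_def r_def c_def by simp
  also have "\<dots> = density (return borel c) (\<lambda>_. ennreal r)"
    by (rule measure_eqI) (auto simp: emeasure_density_const)
  finally have "(\<integral>x. f x \<partial>beta_meas \<mu> \<nu>) = (\<integral>x. r *\<^sub>R f x \<partial>return borel c)"
    using \<open>r > 0\<close> f by (simp add: integral_density)
  also have "\<dots> = r * f c"
    using f by (subst integral_return) auto
  finally show ?thesis unfolding r_def c_def .
qed

lemma le_E_integral_beta_meas_le:
  fixes f :: "real \<Rightarrow> real"
  assumes M: "fin_meas_first_moment \<mu>" and N: "fin_meas_first_moment \<nu>" and E: "le_E \<mu> \<nu>"
    and f: "convex_on UNIV f" "integrable \<mu> f" "integrable \<nu> f"
  shows "(\<integral>x. f x \<partial>beta_meas \<mu> \<nu>) \<le> (\<integral>x. f x \<partial>\<nu>) - (\<integral>x. f x \<partial>\<mu>)"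
proof -
  define c where "c = (bary \<nu> - bary \<mu>) / (mass \<nu> - mass \<mu>)"
  obtain s where supporting: "\<And>y. f c + s * (y - c) \<le> f y"
    using convex_le_Inf_differential[OF f(1), of c] by auto
  have "(f c - s * c) * (mass \<nu> - mass \<mu>) + s * (bary \<nu> - bary \<mu>)
      \<le> (\<integral>x. f x \<partial>\<nu>) - (\<integral>x. f x \<partial>\<mu>)"
    by (rule le_E_affine_minorant[OF M N E f]) (use supporting in \<open>simp add: algebra_simps\<close>)
  moreover have "(f c - s * c) * (mass \<nu> - mass \<mu>) + s * (bary \<nu> - bary \<mu>)
      = (mass \<nu> - mass \<mu>) * f c + s * ((bary \<nu> - bary \<mu>) - (mass \<nu> - mass \<mu>) * c)"
    by (simp add: algebra_simps)
  also have "\<dots> = (mass \<nu> - mass \<mu>) * f c"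
    unfolding c_def le_E_bary_diff_eq_mass_diff_mult[OF M N E] by simp
  moreover have "f \<in> borel_measurable borel"
    using borel_measurable_integrable[OF f(2)]
    unfolding fin_meas_first_moment_borel_measurable_eq[OF M] .
  then have "(\<integral>x. f x \<partial>beta_meas \<mu> \<nu>) = (mass \<nu> - mass \<mu>) * f c"
    unfolding c_def by (rule integral_beta_meas[OF le_E_mass_le[OF M N E]])
  ultimately show ?thesis by linarith
qed

lemma put_fun_beta_meas:
  assumes M: "fin_meas_first_moment \<mu>" and N: "fin_meas_first_moment \<nu>" and E: "le_E \<mu> \<nu>"
  shows "put_fun (beta_meas \<mu> \<nu>) k = max ((mass \<nu> - mass \<mu>) * k - (bary \<nu> - bary \<mu>)) 0"
proof -
  let ?c = "(bary \<nu> - bary \<mu>) / (mass \<nu> - mass \<mu>)"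
  have "put_fun (beta_meas \<mu> \<nu>) k = (mass \<nu> - mass \<mu>) * max (k - ?c) 0"
    unfolding put_fun_def by (rule integral_beta_meas[OF le_E_mass_le[OF M N E]]) measurable
  also have "\<dots> = max ((mass \<nu> - mass \<mu>) * k - (mass \<nu> - mass \<mu>) * ?c) 0"
    using le_E_mass_le[OF M N E] by (simp add: max_mult_distrib_left right_diff_distrib)
  finally show ?thesis
    unfolding le_E_bary_diff_eq_mass_diff_mult[OF M N E] .
qed

theorem corollary3p6:
  fixes \<mu> \<nu> :: "real measure"
  assumes "fin_meas_first_moment \<mu>" and "fin_meas_first_moment \<nu>"
    and "le_E \<mu> \<nu>"
  shows "(\<forall>f::real \<Rightarrow> real. convex_on UNIV f \<and> integrable \<mu> f \<and> integrable \<nu> f \<longrightarrow>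
            (\<integral>x. f x \<partial>beta_meas \<mu> \<nu>) \<le> (\<integral>x. f x \<partial>\<nu>) - (\<integral>x. f x \<partial>\<mu>))
       \<and> (\<forall>k::real. put_fun (beta_meas \<mu> \<nu>) k
                      = max ((mass \<nu> - mass \<mu>) * k - (bary \<nu> - bary \<mu>)) 0
                  \<and> put_fun (beta_meas \<mu> \<nu>) k \<le> put_fun \<nu> k - put_fun \<mu> k)"
proof -
  have "put_fun (beta_meas \<mu> \<nu>) k \<le> put_fun \<nu> k - put_fun \<mu> k" for k
    using le_E_integral_beta_meas_le[OF assms convex_on_positive_part_affine
        fin_meas_first_moment_integrable_positive_part_affine[OF assms(1)]
        fin_meas_first_moment_integrable_positive_part_affine[OF assms(2)], of k "-1"]
    unfolding put_fun_def by simp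
  then show ?thesis
    using le_E_integral_beta_meas_le[OF assms] put_fun_beta_meas[OF assms] by blast
qed

end
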